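(* Let $\alpha>0$, $n\in\mathbb N$, $0<a<b$ and let $x:[a,b]\to\mathbb R$ be a function of class $C^{n+1}$. Then, for $t\in[a,b)$, \[ {_t\mathcal{I}_b^\alpha} x(t)=\sum_{i=0}^{n}A_i(\alpha)\left(\ln\frac{b}{t}\right)^{\alpha+i} x_{i,0}(t)+\sum_{p=n+1}^\infty B(\alpha,p)\left(\ln\frac{b}{t}\right)^{\alpha+n-p}W_p(t), \] with \[ A_i(\alpha)=\frac{(-1)^i}{\Gamma(\alpha+i+1)}\left[1+\sum_{p=n-i+1}^\infty\frac{\Gamma(p-\alpha-n)}{\Gamma(-\alpha-i)(p-n+i)!}\right],\qquad B(\alpha,p)=\frac{\Gamma(p-\alpha-n)}{\Gamma(\alpha)\Gamma(1-\alpha)(p-n)!}, \] \[ W_p(t)=\int_t^b (p-n)\left(\ln\frac{b}{\tau}\right)^{p-n-1}\frac{x(\tau)}{\tau}\,d\tau. \]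
   Context: For $0<a<b$ and $\alpha>0$ the right Hadamard fractional integral is ${_t\mathcal{I}_b^\alpha} x(t)=\frac{1}{\Gamma(\alpha)}\int_t^b \left(\ln\frac{\tau}{t}\right)^{\alpha-1}\frac{x(\tau)}{\tau}\,d\tau$. The functions $x_{k,0}$ are defined recursively by $x_{0,0}(t)=x(t)$ and $x_{k+1,0}(t)=t\frac{d}{dt}x_{k,0}(t)$ for $k\ge 0$. $\Gamma$ is Euler's gamma function. *)

theory Defs
  imports "HOL-Analysis.Analysis"
begin

definition hadamard_right :: "real \<Rightarrow> real \<Rightarrow> (real \<Rightarrow> real) \<Rightarrow> real \<Rightarrow> real" where
  "hadamard_right \<alpha> b x t =
     (1 / Gamma \<alpha>) * integral {t..b} (\<lambda>\<tau>. (ln (\<tau> / t)) powr (\<alpha> - 1) * x \<tau> / \<tau>)"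

definition C_k_on :: "nat \<Rightarrow> real \<Rightarrow> real \<Rightarrow> (real \<Rightarrow> real) \<Rightarrow> bool" where
  "C_k_on m a b x \<longleftrightarrow>
     (\<exists>D :: nat \<Rightarrow> real \<Rightarrow> real.
        (\<forall>t\<in>{a..b}. D 0 t = x t) \<and>
        (\<forall>k<m. \<forall>t\<in>{a..b}. (D k has_real_derivative D (Suc k) t) (at t within {a..b})) \<and>
        (\<forall>k\<le>m. continuous_on {a..b} (D k)))"

fun xk0 :: "real \<Rightarrow> real \<Rightarrow> (real \<Rightarrow> real) \<Rightarrow> nat \<Rightarrow> real \<Rightarrow> real" where
  "xk0 a b x 0 = x"
| "xk0 a b x (Suc k) = (\<lambda>t. t * vector_derivative (xk0 a b x k) (at t within {a..b}))"

text \<open>A_i(alpha); the inner sum over p = n-i+1, n-i+2, ... is written with p = j + n - i + 1.\<close>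
definition A_coef :: "nat \<Rightarrow> real \<Rightarrow> nat \<Rightarrow> real" where
  "A_coef n \<alpha> i = ((-1) ^ i / Gamma (\<alpha> + real i + 1)) *
     (1 + (\<Sum>j. Gamma (real j + 1 - real i - \<alpha>) / (Gamma (- \<alpha> - real i) * fact (j + 1))))"

definition B_coef :: "nat \<Rightarrow> real \<Rightarrow> nat \<Rightarrow> real" where
  "B_coef n \<alpha> p = Gamma (real p - \<alpha> - real n) / (Gamma \<alpha> * Gamma (1 - \<alpha>) * fact (p - n))"

definition W_fun :: "nat \<Rightarrow> real \<Rightarrow> (real \<Rightarrow> real) \<Rightarrow> nat \<Rightarrow> real \<Rightarrow> real" where
  "W_fun n b x p t = integral {t..b}
     (\<lambda>\<tau>. real (p - n) * (ln (b / \<tau>)) ^ (p - n - 1) * x \<tau> / \<tau>)"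

end

theory Submission
  imports Defs
begin

text \<open>
  All coefficients A_i vanish: with g = \<alpha> + i, the bracket in A_i is
  1 + (sum over m \<ge> 1 of (g choose m) (-1)^m), the binomial series of (1 - 1)^g = 0 on the
  boundary of its disc of convergence; its partial sums are (-1)^m (g - 1 choose m) \<rightarrow> 0.
  The identity is therefore an expansion of the kernel alone.  With L = ln (b/t) and
  s = ln (b/\<tau>) / L \<in> [0,1) one has ln (\<tau>/t) = L (1 - s), so (ln (\<tau>/t))^(\<alpha>-1) = L^(\<alpha>-1) (1 - s)^(\<alpha>-1)
  expands into the binomial series in s, whose k-th term integrates to the k-th B-term.
  Termwise integration is justified by dominated convergence: the binomial coefficients
  eventually have constant sign, so the partial sums of the absolute series are bounded by
  (1 - s)^(\<alpha>-1) plus a constant, which is integrable against d\<tau>/\<tau>.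
\<close>

lemma gbinomial_tendsto_0:
  fixes a :: real
  assumes "a > -1"
  shows "(\<lambda>k. a gchoose k) \<longlonglongrightarrow> 0"
proof -
  define w where "w k = (-1) ^ k / exp ((a + 1) * ln (real k))" for k :: nat
  have "(\<lambda>k. real k powr - (a + 1)) \<longlonglongrightarrow> 0"
    using assms by (intro tendsto_neg_powr filterlim_real_sequentially) auto
  moreover have "\<forall>\<^sub>F k in sequentially. real k powr - (a + 1) = norm (w k)"
    using eventually_gt_at_top[of 0] unfolding powr_minus_divide
    by eventually_elim (simp add: w_def powr_def norm_divide)
  ultimately have "(\<lambda>k. norm (w k)) \<longlonglongrightarrow> 0"
    by (rule Lim_transform_eventually)
  then have "w \<longlonglongrightarrow> 0"
    by (rule tendsto_norm_zero_cancel)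
  then have "(\<lambda>k. (a gchoose k) / w k * w k) \<longlonglongrightarrow> inverse (Gamma (- a)) * 0"
    using gbinomial_asymptotic[of a] unfolding w_def by (intro tendsto_mult) simp_all
  moreover have "(a gchoose k) / w k * w k = a gchoose k" for k
    by (simp add: w_def)
  ultimately show ?thesis
    by simp
qed

lemma gbinomial_alternating_sums_0:
  fixes a :: real
  assumes "a > 0"
  shows "(\<lambda>k. (a gchoose k) * (-1) ^ k) sums 0"
proof -
  have "(\<lambda>m. norm ((-1) ^ m * (a - 1 gchoose m))) \<longlonglongrightarrow> 0"
    using tendsto_norm_zero[OF gbinomial_tendsto_0[of "a - 1"]] assms by (simp add: abs_mult power_abs)
  then have "(\<lambda>m. \<Sum>k\<le>m. (a gchoose k) * (-1) ^ k) \<longlonglongrightarrow> 0"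
    unfolding gbinomial_sum_lower_neg by (rule tendsto_norm_zero_cancel)
  then show ?thesis
    unfolding sums_def by (subst filterlim_sequentially_Suc [symmetric]) (simp add: lessThan_Suc_atMost)
qed

lemma gbinomial_alternating_eq_pochhammer:
  "(a gchoose k) * (-1) ^ k = pochhammer (- a) k / fact k"
  by (simp add: gbinomial_pochhammer flip: power_mult_distrib)

lemma A_coef_eq_0:
  assumes "\<alpha> > 0" and "\<alpha> \<notin> \<int>"
  shows "A_coef n \<alpha> i = 0"
proof -
  define \<gamma> where "\<gamma> = \<alpha> + real i"
  have "- \<gamma> \<notin> \<int>\<^sub>\<le>\<^sub>0"
  proof
    assume "- \<gamma> \<in> \<int>\<^sub>\<le>\<^sub>0"
    then have "- (- \<gamma>) - real i \<in> \<int>"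
      by (intro Ints_diff) auto
    with assms(2) show False
      by (simp add: \<gamma>_def)
  qed
  then have term_eq: "Gamma (real j + 1 - real i - \<alpha>) / (Gamma (- \<alpha> - real i) * fact (j + 1))
      = (\<gamma> gchoose Suc j) * (-1) ^ Suc j" for j
    unfolding gbinomial_alternating_eq_pochhammer pochhammer_Gamma[OF \<open>- \<gamma> \<notin> \<int>\<^sub>\<le>\<^sub>0\<close>]
    by (simp add: \<gamma>_def algebra_simps)
  have "(\<lambda>j. (\<gamma> gchoose Suc j) * (-1) ^ Suc j) sums (0 - 1)"
    using gbinomial_alternating_sums_0[of \<gamma>] assms(1) by (subst sums_Suc_iff) (simp add: \<gamma>_def)
  then show ?thesis
    unfolding A_coef_def term_eq by (simp add: sums_iff)
qed

lemma gbinomial_alternating_eventually_sign: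
  fixes a :: real
  obtains m where "(\<forall>k\<ge>m. 0 \<le> (a gchoose k) * (-1) ^ k) \<or> (\<forall>k\<ge>m. (a gchoose k) * (-1) ^ k \<le> 0)"
proof -
  define e where "e k = (a gchoose k) * (-1) ^ k" for k
  define m where "m = nat \<lceil>a\<rceil>"
  have e_Suc: "e (Suc k) = e k * ((real k - a) / (real k + 1))" for k
    unfolding e_def gbinomial_alternating_eq_pochhammer by (simp add: pochhammer_Suc field_simps)
  have "\<exists>c\<ge>0. e k = c * e m" if "m \<le> k" for k
    using that
  proof (induction k rule: dec_induct)
    case base
    show ?case by (intro exI[of _ 1]) simp
  next
    case (step k)
    then obtain c where c: "c \<ge> 0" "e k = c * e m"
      by blast
    have "(real k - a) / (real k + 1) \<ge> 0"
      using step.hyps(1) by (simp add: m_def)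
    then have "0 \<le> c * ((real k - a) / (real k + 1))"
      by (rule mult_nonneg_nonneg[OF c(1)])
    then show ?case
      using c(2) by (intro exI[of _ "c * ((real k - a) / (real k + 1))"]) (simp add: e_Suc)
  qed
  then have "(\<forall>k\<ge>m. 0 \<le> e k) \<or> (\<forall>k\<ge>m. e k \<le> 0)"
    by (cases "e m \<ge> 0") (force intro: mult_nonneg_nonneg mult_nonneg_nonpos)+
  then show ?thesis
    using that unfolding e_def by blast
qed

lemma sum_abs_le_if_sums_eventually_nonneg:
  fixes f :: "nat \<Rightarrow> real"
  assumes "f sums S" and "\<forall>k\<ge>m. 0 \<le> f k"
  shows "(\<Sum>k<N. \<bar>f k\<bar>) \<le> S + 2 * (\<Sum>k<m. \<bar>f k\<bar>)"
proof -
  define M where "M = max N m"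
  have "(\<Sum>k<N. \<bar>f k\<bar>) \<le> (\<Sum>k<M. \<bar>f k\<bar>)"
    by (rule sum_mono2) (auto simp: M_def)
  also have "\<dots> = (\<Sum>k<M. f k) + (\<Sum>k<M. \<bar>f k\<bar> - f k)"
    by (simp add: sum_subtractf)
  also have "(\<Sum>k<M. \<bar>f k\<bar> - f k) = (\<Sum>k<m. \<bar>f k\<bar> - f k)"
    using assms(2) by (intro sum.mono_neutral_right) (auto simp: M_def)
  also have "(\<Sum>k<M. f k) \<le> S"
    unfolding sums_unique[OF assms(1)] using assms
    by (intro sum_le_suminf) (auto simp: sums_summable M_def)
  also have "(\<Sum>k<m. \<bar>f k\<bar> - f k) \<le> 2 * (\<Sum>k<m. \<bar>f k\<bar>)"
    by (simp add: sum_distrib_left sum_mono)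
  finally show ?thesis
    by simp
qed

lemma binomial_series_abs_partial_sums_bounded:
  fixes a :: real
  obtains C where "\<And>s N. 0 \<le> s \<Longrightarrow> s < 1 \<Longrightarrow> (\<Sum>k<N. \<bar>(a gchoose k) * (- s) ^ k\<bar>) \<le> (1 - s) powr a + C"
proof -
  define e where "e k = (a gchoose k) * (-1) ^ k" for k
  obtain m where m: "(\<forall>k\<ge>m. 0 \<le> e k) \<or> (\<forall>k\<ge>m. e k \<le> 0)"
    unfolding e_def by (rule gbinomial_alternating_eventually_sign)
  have "(\<Sum>k<N. \<bar>(a gchoose k) * (- s) ^ k\<bar>) \<le> (1 - s) powr a + 2 * (\<Sum>k<m. \<bar>e k\<bar>)"
    if s: "0 \<le> s" "s < 1" for s N
  proof -
    define f where "f k = e k * s ^ k" for k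
    have f_eq: "f k = (a gchoose k) * (- s) ^ k" for k
      unfolding f_def e_def power_minus[of s] by (simp add: mult.assoc)
    have f_sums: "f sums (1 - s) powr a"
      using gen_binomial_real[of "- s" a] s unfolding f_eq by simp
    have "(\<Sum>k<N. \<bar>f k\<bar>) \<le> (1 - s) powr a + 2 * (\<Sum>k<m. \<bar>f k\<bar>)"
      using m
    proof
      assume "\<forall>k\<ge>m. 0 \<le> e k"
      then show ?thesis
        using s by (intro sum_abs_le_if_sums_eventually_nonneg[OF f_sums]) (simp add: f_def)
    next
      assume "\<forall>k\<ge>m. e k \<le> 0"
      then have "\<forall>k\<ge>m. 0 \<le> - f k"
        using s by (simp add: f_def mult_nonpos_nonneg)
      then have "(\<Sum>k<N. \<bar>- f k\<bar>) \<le> - ((1 - s) powr a) + 2 * (\<Sum>k<m. \<bar>- f k\<bar>)"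
        by (intro sum_abs_le_if_sums_eventually_nonneg sums_minus f_sums)
      moreover have "- ((1 - s) powr a) \<le> (1 - s) powr a"
        by simp
      ultimately show ?thesis
        unfolding abs_minus_cancel by linarith
    qed
    also have "(\<Sum>k<m. \<bar>f k\<bar>) \<le> (\<Sum>k<m. \<bar>e k\<bar>)"
      using s by (intro sum_mono) (simp add: f_def abs_mult power_le_one mult_left_le)
    finally show ?thesis
      by (simp add: f_eq)
  qed
  then show ?thesis
    using that by blast
qed

lemma sums_integral_dominated:
  fixes u :: "nat \<Rightarrow> 'a::euclidean_space \<Rightarrow> real"
  assumes "\<And>k. u k integrable_on S" and "h integrable_on S"
    and "\<And>N x. x \<in> S \<Longrightarrow> \<bar>\<Sum>k<N. u k x\<bar> \<le> h x"
    and "\<And>x. x \<in> S \<Longrightarrow> (\<lambda>k. u k x) sums g x"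
  shows "(\<lambda>k. integral S (u k)) sums integral S g"
proof -
  have "(\<lambda>N. integral S (\<lambda>x. \<Sum>k<N. u k x)) \<longlonglongrightarrow> integral S g"
    using assms by (intro dominated_convergence(2) integrable_sum) (auto simp: sums_def)
  then show ?thesis
    unfolding sums_def by (simp add: integral_sum assms(1))
qed

lemma ln_ratio_powr_integrable:
  fixes t b \<alpha> :: real
  assumes "0 < t" and "t \<le> b" and "\<alpha> > 0"
  shows "(\<lambda>\<tau>. ln (\<tau> / t) powr (\<alpha> - 1) / \<tau>) integrable_on {t..b}"
proof -
  define P where "P \<tau> = ln (\<tau> / t) powr \<alpha> / \<alpha>" for \<tau>
  have "((\<lambda>\<tau>. ln (\<tau> / t) powr (\<alpha> - 1) / \<tau>) has_integral (P b - P t)) {t..b}"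
  proof (rule fundamental_theorem_of_calculus_interior)
    show "continuous_on {t..b} P"
      unfolding P_def using assms by (intro continuous_intros continuous_on_powr') auto
  next
    fix \<tau> assume "\<tau> \<in> {t<..<b}"
    then have "(P has_real_derivative \<alpha> * ln (\<tau> / t) powr (\<alpha> - 1) * (1 / \<tau>) / \<alpha>) (at \<tau>)"
      unfolding P_def using assms by (auto intro!: derivative_eq_intros)
    then show "(P has_vector_derivative ln (\<tau> / t) powr (\<alpha> - 1) / \<tau>) (at \<tau>)"
      using assms by (simp add: has_real_derivative_iff_has_vector_derivative[symmetric])
  qed (use assms in auto)
  then show ?thesis
    by blast
qed

lemma ln_ratio_binomial_substitution:
  fixes t \<tau> b a :: real
  assumes "0 < t" and "t < \<tau>" and "\<tau> < b"
  defines "L \<equiv> ln (b / t)" and "s \<equiv> ln (b / \<tau>) / ln (b / t)"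
  shows "0 \<le> s" and "s < 1"
    and "ln (\<tau> / t) powr a = L powr a * (1 - s) powr a"
    and "(a gchoose k) * (-1) ^ k * L powr (a - real k) * ln (b / \<tau>) ^ k = (a gchoose k) * (- s) ^ k * L powr a"
proof -
  have "ln (b / \<tau>) = ln b - ln \<tau>" "L = ln b - ln t" "ln (\<tau> / t) = ln \<tau> - ln t" "ln t < ln \<tau>" "ln \<tau> < ln b"
    using assms unfolding L_def by (auto simp: ln_div)
  then have L: "L > 0" and "ln (\<tau> / t) = L - ln (b / \<tau>)" "0 \<le> ln (b / \<tau>)" "ln (b / \<tau>) < L"
    by linarith+
  then have "0 \<le> s" "s < 1" "ln (\<tau> / t) = L * (1 - s)"
    unfolding s_def L_def[symmetric] by (auto simp: field_simps)
  then show "0 \<le> s" "s < 1" and "ln (\<tau> / t) powr a = L powr a * (1 - s) powr a"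
    using L by (simp_all add: powr_mult)
  have "L powr (a - real k) * ln (b / \<tau>) ^ k = s ^ k * L powr a"
    using L unfolding s_def L_def[symmetric] by (simp add: powr_diff powr_realpow power_divide)
  then show "(a gchoose k) * (-1) ^ k * L powr (a - real k) * ln (b / \<tau>) ^ k = (a gchoose k) * (- s) ^ k * L powr a"
    unfolding power_minus[of s] by (metis mult.assoc)
qed

lemma ln_ratio_powr_binomial_series:
  fixes t \<tau> b a :: real
  assumes "0 < t" and "t < \<tau>" and "\<tau> < b"
  shows "(\<lambda>k. (a gchoose k) * (-1) ^ k * ln (b / t) powr (a - real k) * ln (b / \<tau>) ^ k) sums ln (\<tau> / t) powr a"
proof -
  define s where "s = ln (b / \<tau>) / ln (b / t)"
  note s = ln_ratio_binomial_substitution(1,2)[OF assms, folded s_def]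
  note subst = ln_ratio_binomial_substitution(3,4)[OF assms, of a, folded s_def]
  have "(\<lambda>k. (a gchoose k) * (- s) ^ k) sums (1 - s) powr a"
    using gen_binomial_real[of "- s" a] s by simp
  from sums_mult2[OF this, of "ln (b / t) powr a"] show ?thesis
    unfolding subst by (simp add: mult.commute)
qed

lemma ln_ratio_powr_binomial_partial_sums_bounded:
  fixes t \<tau> b a C :: real
  assumes "0 < t" and "t < \<tau>" and "\<tau> < b"
    and C: "\<And>y N. 0 \<le> y \<Longrightarrow> y < 1 \<Longrightarrow> (\<Sum>k<N. \<bar>(a gchoose k) * (- y) ^ k\<bar>) \<le> (1 - y) powr a + C"
  shows "\<bar>\<Sum>k<N. (a gchoose k) * (-1) ^ k * ln (b / t) powr (a - real k) * ln (b / \<tau>) ^ k\<bar>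
           \<le> ln (\<tau> / t) powr a + C * ln (b / t) powr a"
proof -
  define s where "s = ln (b / \<tau>) / ln (b / t)"
  note s = ln_ratio_binomial_substitution(1,2)[OF assms(1-3), folded s_def]
  note subst = ln_ratio_binomial_substitution(3,4)[OF assms(1-3), of a, folded s_def]
  have "\<bar>\<Sum>k<N. (a gchoose k) * (- s) ^ k * ln (b / t) powr a\<bar>
      = \<bar>\<Sum>k<N. (a gchoose k) * (- s) ^ k\<bar> * ln (b / t) powr a"
    by (simp add: sum_distrib_right[symmetric] abs_mult)
  also have "\<dots> \<le> (\<Sum>k<N. \<bar>(a gchoose k) * (- s) ^ k\<bar>) * ln (b / t) powr a"
    by (intro mult_right_mono sum_abs) simp
  also have "\<dots> \<le> ((1 - s) powr a + C) * ln (b / t) powr a"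
    using C[OF s] by (simp add: mult_right_mono)
  finally show ?thesis
    unfolding subst by (simp add: algebra_simps)
qed

lemma ln_ratio_powr_binomial_sums:
  fixes \<alpha> t b :: real and f :: "real \<Rightarrow> real"
  assumes "\<alpha> > 0" and "0 < t" and "t < b" and "continuous_on {t..b} f"
  shows "(\<lambda>k. ((\<alpha> - 1) gchoose k) * (-1) ^ k * ln (b / t) powr (\<alpha> - 1 - real k)
              * integral {t..b} (\<lambda>\<tau>. ln (b / \<tau>) ^ k * f \<tau> / \<tau>))
         sums integral {t..b} (\<lambda>\<tau>. ln (\<tau> / t) powr (\<alpha> - 1) * f \<tau> / \<tau>)"
proof -
  define c where "c k \<tau> = ((\<alpha> - 1) gchoose k) * (-1) ^ k * ln (b / t) powr (\<alpha> - 1 - real k) * ln (b / \<tau>) ^ k"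
    for k \<tau>
  define u where "u k \<tau> = c k \<tau> * (f \<tau> / \<tau>)" for k \<tau>
  define S where "S = {t<..<b}"
    \<comment> \<open>at \<tau> = t the binomial variable reaches 1, so the pointwise facts only hold inside\<close>
  obtain C where C: "\<And>y N. 0 \<le> y \<Longrightarrow> y < 1 \<Longrightarrow>
      (\<Sum>k<N. \<bar>((\<alpha> - 1) gchoose k) * (- y) ^ k\<bar>) \<le> (1 - y) powr (\<alpha> - 1) + C"
    using binomial_series_abs_partial_sums_bounded[of "\<alpha> - 1"] by blast
  obtain M where M: "\<And>\<tau>. \<tau> \<in> {t..b} \<Longrightarrow> \<bar>f \<tau>\<bar> \<le> M"
    using continuous_on_compact_bound[OF compact_Icc assms(4)] by (metis real_norm_def)
  define h where "h \<tau> = M * (ln (\<tau> / t) powr (\<alpha> - 1) / \<tau>) + M * C * ln (b / t) powr (\<alpha> - 1) * (1 / \<tau>)" for \<tau>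
  have "(\<lambda>k. integral S (u k)) sums integral S (\<lambda>\<tau>. ln (\<tau> / t) powr (\<alpha> - 1) * f \<tau> / \<tau>)"
  proof (rule sums_integral_dominated)
    show "u k integrable_on S" for k
      unfolding S_def u_def c_def integrable_on_Icc_iff_Ioo[symmetric] using assms
      by (intro integrable_continuous_interval continuous_intros) auto
    show "h integrable_on S"
      unfolding S_def h_def integrable_on_Icc_iff_Ioo[symmetric] using assms
      by (intro integrable_add integrable_on_mult_right ln_ratio_powr_integrable
          integrable_continuous_interval continuous_intros) auto
  next
    fix \<tau> assume "\<tau> \<in> S"
    then have \<tau>: "0 < t" "t < \<tau>" "\<tau> < b"
      using assms by (auto simp: S_def)
    show "(\<lambda>k. u k \<tau>) sums (ln (\<tau> / t) powr (\<alpha> - 1) * f \<tau> / \<tau>)"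
      using sums_mult2[OF ln_ratio_powr_binomial_series[OF \<tau>, of "\<alpha> - 1"], of "f \<tau> / \<tau>"]
      by (simp add: u_def c_def)
    fix N
    have "\<bar>\<Sum>k<N. u k \<tau>\<bar> = \<bar>\<Sum>k<N. c k \<tau>\<bar> * (\<bar>f \<tau>\<bar> / \<tau>)"
      unfolding u_def sum_distrib_right[symmetric] using \<tau> by (simp add: abs_mult)
    also have "\<dots> \<le> (ln (\<tau> / t) powr (\<alpha> - 1) + C * ln (b / t) powr (\<alpha> - 1)) * (M / \<tau>)"
      using ln_ratio_powr_binomial_partial_sums_bounded[OF \<tau> C, of N] M[of \<tau>] \<tau>
        ln_ratio_powr_binomial_partial_sums_bounded[OF \<tau> C, of 0]
      unfolding c_def by (intro mult_mono divide_right_mono) auto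
    also have "\<dots> = h \<tau>"
      unfolding h_def using \<tau> by (simp add: field_simps)
    finally show "\<bar>\<Sum>k<N. u k \<tau>\<bar> \<le> h \<tau>" .
  qed
  then show ?thesis
    unfolding S_def integral_open_interval_real[symmetric] u_def c_def
    by (simp add: mult.assoc flip: integral_mult_right)
qed

lemma B_coef_W_fun_eq:
  assumes "\<alpha> \<notin> \<int>"
  shows "B_coef n \<alpha> (k + n + 1) * L powr (\<alpha> + real n - real (k + n + 1)) * W_fun n b x (k + n + 1) t
       = ((\<alpha> - 1) gchoose k) * (-1) ^ k * L powr (\<alpha> - 1 - real k)
           * integral {t..b} (\<lambda>\<tau>. ln (b / \<tau>) ^ k * x \<tau> / \<tau>) / Gamma \<alpha>"
proof -
  have "1 - \<alpha> \<notin> \<int>\<^sub>\<le>\<^sub>0"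
  proof
    assume "1 - \<alpha> \<in> \<int>\<^sub>\<le>\<^sub>0"
    then have "1 - (1 - \<alpha>) \<in> \<int>"
      by (intro Ints_diff) auto
    with assms show False
      by simp
  qed
  then have "Gamma (1 - \<alpha>) \<noteq> 0"
    by (simp add: Gamma_eq_zero_iff)
  moreover have "Gamma (real (k + n + 1) - \<alpha> - real n) = ((\<alpha> - 1) gchoose k) * (-1) ^ k * fact k * Gamma (1 - \<alpha>)"
    unfolding gbinomial_alternating_eq_pochhammer
    using pochhammer_Gamma[OF \<open>1 - \<alpha> \<notin> \<int>\<^sub>\<le>\<^sub>0\<close>, of k] \<open>Gamma (1 - \<alpha>) \<noteq> 0\<close>
    by (simp add: algebra_simps)
  ultimately have B: "B_coef n \<alpha> (k + n + 1) = ((\<alpha> - 1) gchoose k) * (-1) ^ k / (Gamma \<alpha> * real (Suc k))"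
    unfolding B_coef_def by (simp del: of_nat_Suc)
  have W: "W_fun n b x (k + n + 1) t = real (Suc k) * integral {t..b} (\<lambda>\<tau>. ln (b / \<tau>) ^ k * x \<tau> / \<tau>)"
    unfolding W_fun_def integral_mult_right[symmetric] by (simp add: mult.assoc del: of_nat_Suc)
  have "\<alpha> + real n - real (k + n + 1) = \<alpha> - 1 - real k"
    by simp
  then show ?thesis
    unfolding B W by (simp only:) (simp del: of_nat_Suc)
qed

lemma C_k_on_imp_continuous_on:
  assumes "C_k_on m a b x"
  shows "continuous_on {a..b} x"
proof -
  obtain D :: "nat \<Rightarrow> real \<Rightarrow> real" where "\<forall>t\<in>{a..b}. D 0 t = x t" and "continuous_on {a..b} (D 0)"
    using assms unfolding C_k_on_def by blast
  then show ?thesis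
    using continuous_on_eq by blast
qed

theorem theorem6p4:
  fixes \<alpha> a b t :: real and n :: nat and x :: "real \<Rightarrow> real"
  assumes "\<alpha> > 0" and "\<alpha> \<notin> \<int>"
    and "0 < a" and "a < b"
    and "C_k_on (Suc n) a b x"
    and "t \<in> {a..<b}"
  shows "summable (\<lambda>k. B_coef n \<alpha> (k + n + 1) * (ln (b / t)) powr (\<alpha> + real n - real (k + n + 1))
                         * W_fun n b x (k + n + 1) t)
     \<and> hadamard_right \<alpha> b x t =
        (\<Sum>i\<le>n. A_coef n \<alpha> i * (ln (b / t)) powr (\<alpha> + real i) * xk0 a b x i t)
        + (\<Sum>k. B_coef n \<alpha> (k + n + 1) * (ln (b / t)) powr (\<alpha> + real n - real (k + n + 1))
                * W_fun n b x (k + n + 1) t)"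
proof -
  have t: "0 < t" "t < b" "{t..b} \<subseteq> {a..b}"
    using assms(3,6) by auto
  have "continuous_on {t..b} x"
    using continuous_on_subset[OF C_k_on_imp_continuous_on[OF assms(5)] t(3)] .
  from sums_divide[OF ln_ratio_powr_binomial_sums[OF assms(1) t(1,2) this], of "Gamma \<alpha>"]
  have "(\<lambda>k. B_coef n \<alpha> (k + n + 1) * (ln (b / t)) powr (\<alpha> + real n - real (k + n + 1))
            * W_fun n b x (k + n + 1) t) sums hadamard_right \<alpha> b x t"
    unfolding B_coef_W_fun_eq[OF assms(2)] hadamard_right_def by simp
  then show ?thesis
    using A_coef_eq_0[OF assms(1,2)] by (simp add: sums_iff)
qed

end
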